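(* Let $Q$ be a groupoid quantale with base locale $A$, and let $G$ be its associated involutive localic graph, consisting of the locales $G_0,G_1,G_2$ and the maps $d,r,i,u,m$ described in the context. Then $G$ is an open localic groupoid.
   Context: Let $A$ be a locale (frame), whose multiplication is $\wedge$. An $A$-$A$-bimodule is a sup-lattice $M$ with actions $(a,m)\mapsto a\triangleright m$ and $(m,a)\mapsto m\triangleleft a$ ($a\in A$, $m\in M$), each preserving arbitrary joins in each variable, such that $1_A\triangleright m=m$, $(a\wedge b)\triangleright m=a\triangleright(b\triangleright m)$, $m\triangleleft 1_A=m$, $m\triangleleft(a\wedge b)=(m\triangleleft a)\triangleleft b$, and $(a\triangleright m)\triangleleft b=a\triangleright(m\triangleleft b)$. An $A$-$A$-quantale is an $A$-$A$-bimodule $Q$ with an associative multiplication $(x,y)\mapsto xy$ preserving arbitrary joins in each variable, such that $(a\triangleright x)y=a\triangleright(xy)$, $(x\triangleleft a)y=x(a\triangleright y)$, $(xy)\triangleleft a=x(y\triangleleft a)$. It is involutive if it has a join-preserving map $x\mapsto x^*$ with $x^{**}=x$, $(xy)^*=y^*x^*$ and $(a\triangleright(x\triangleleft b))^*=b\triangleright(x^*\triangleleft a)$. $1_Q$ is the top of $Q$. A support is a join-preserving map $\varsigma:Q\to A$ with $\varsigma(1_Q)=1_A$, $\varsigma(x)\triangleright y\le xx^*y$ and $\varsigma(x)\triangleright x=x$ for all $x,y\in Q$; it is equivariant if $\varsigma(a\triangleright x)=a\wedge\varsigma(x)$ for all $a\in A,x\in Q$. A based quantal frame is an involutive $A$-$A$-quantale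 whose underlying lattice is a frame and such that $(a\triangleright x)\wedge y=a\triangleright(x\wedge y)$ and $(x\triangleleft a)\wedge y=(x\wedge y)\triangleleft a$. It is reflexive if equipped with a frame homomorphism $\upsilon:Q\to A$ with $\upsilon(a\triangleright 1_Q)=a=\upsilon(1_Q\triangleleft a)$ for all $a\in A$. Let $Q\otimes_A Q$ be the quotient of the sup-lattice tensor product $Q\otimes Q$ by the relations $x\otimes(a\triangleright y)=(x\triangleleft a)\otimes y$; the multiplication factors as a sup-lattice homomorphism $\mu_A:Q\otimes_AQ\to Q$, $x\otimes y\mapsto xy$, and $Q$ is multiplicative if the right adjoint of $\mu_A$ preserves arbitrary joins. $Q$ satisfies the unit laws if $\bigvee_{xy\le a}\upsilon(x)\triangleright y=a$ for all $a\in Q$, and the inverse law if $\upsilon(a)\triangleright 1_Q=\bigvee_{xy^*\le a}x\wedge y$ for all $a\in Q$. A groupoid quantale is a multiplicative, equivariantly supported, reflexive based quantal frame satisfying the unit laws and the inverse law. Its associated involutive localic graph: locales $G_0,G_1$ with $\mathcal O(G_0)=A$, $\mathcal O(G_1)=Q$; $d:G_1\to G_0$ with $d^*(a)=a\triangleright 1_Q$; $i:G_1\to G_1$ with $i^*(x)=x^*$; $r=d\circ i$; $u:G_0\to G_1$ with $u^*=\upsilon$; $G_2$ the pullback of $r$ (via the first projection) and $d$ (via the second), with $\mathcal O(G_2)=Q\otimes_AQ$; and $m:G_2\to G_1$ with $m^*(a)=\bigvee_{xy\le a}x\otimes y$. A localic groupoid is open if $d$ is an open map. *)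

theory Defs
  imports Main
begin

text \<open>A locale is identified with its frame of opens; a locale map f : X -> Y is represented
  by its inverse image frame homomorphism f* : O(Y) -> O(X).\<close>

class frame = complete_lattice +
  assumes inf_Sup_frame: "inf x (Sup S) = (SUP y\<in>S. inf x y)"

definition frame_hom_into ::
  "'y set \<Rightarrow> ('y set \<Rightarrow> 'y) \<Rightarrow> ('y \<Rightarrow> 'y \<Rightarrow> 'y) \<Rightarrow> 'y \<Rightarrow> ('x::complete_lattice \<Rightarrow> 'y) \<Rightarrow> bool" where
  "frame_hom_into C Sup' inf' top' f \<longleftrightarrow>
     (\<forall>x. f x \<in> C) \<and> (\<forall>X. f (Sup X) = Sup' (f ` X)) \<and>
     (\<forall>x y. f (inf x y) = inf' (f x) (f y)) \<and> f top = top'"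

definition frame_hom :: "('x::complete_lattice \<Rightarrow> 'y::complete_lattice) \<Rightarrow> bool" where
  "frame_hom f \<longleftrightarrow> frame_hom_into UNIV Sup inf top f"

text \<open>Open locale map (Joyal--Tierney), in terms of its inverse image f*: f* has a left
  adjoint f_! satisfying the Frobenius reciprocity condition.\<close>
definition open_map :: "('y::complete_lattice \<Rightarrow> 'x::complete_lattice) \<Rightarrow> bool" where
  "open_map fstar \<longleftrightarrow>
     (\<exists>fl :: 'x \<Rightarrow> 'y. (\<forall>x b. fl x \<le> b \<longleftrightarrow> x \<le> fstar b) \<and>
                    (\<forall>x b. fl (inf x (fstar b)) = inf (fl x) b))"

text \<open>Parameters: l = left action (a,m) |-> a |> m, r = right action (m,a) |-> m <| a,
  mult = multiplication of Q, invl = involution. The base locale A has multiplication inf and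
  unit top; 1_Q = top.\<close>

definition AA_bimodule :: "('a::frame \<Rightarrow> 'q::complete_lattice \<Rightarrow> 'q) \<Rightarrow> ('q \<Rightarrow> 'a \<Rightarrow> 'q) \<Rightarrow> bool" where
  "AA_bimodule l r \<longleftrightarrow>
     (\<forall>S m. l (Sup S) m = (SUP a\<in>S. l a m)) \<and> (\<forall>a M. l a (Sup M) = (SUP m\<in>M. l a m)) \<and>
     (\<forall>M a. r (Sup M) a = (SUP m\<in>M. r m a)) \<and> (\<forall>m S. r m (Sup S) = (SUP a\<in>S. r m a)) \<and>
     (\<forall>m. l top m = m) \<and> (\<forall>a b m. l (inf a b) m = l a (l b m)) \<and>
     (\<forall>m. r m top = m) \<and> (\<forall>a b m. r m (inf a b) = r (r m a) b) \<and>
     (\<forall>a m b. r (l a m) b = l a (r m b))"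

definition AA_quantale ::
  "('a::frame \<Rightarrow> 'q::complete_lattice \<Rightarrow> 'q) \<Rightarrow> ('q \<Rightarrow> 'a \<Rightarrow> 'q) \<Rightarrow> ('q \<Rightarrow> 'q \<Rightarrow> 'q) \<Rightarrow> bool" where
  "AA_quantale l r mult \<longleftrightarrow> AA_bimodule l r \<and>
     (\<forall>x y z. mult (mult x y) z = mult x (mult y z)) \<and>
     (\<forall>X y. mult (Sup X) y = (SUP x\<in>X. mult x y)) \<and>
     (\<forall>x Y. mult x (Sup Y) = (SUP y\<in>Y. mult x y)) \<and>
     (\<forall>a x y. mult (l a x) y = l a (mult x y)) \<and>
     (\<forall>x a y. mult (r x a) y = mult x (l a y)) \<and>
     (\<forall>x y a. r (mult x y) a = mult x (r y a))"

definition involutive_AA_quantale ::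
  "('a::frame \<Rightarrow> 'q::complete_lattice \<Rightarrow> 'q) \<Rightarrow> ('q \<Rightarrow> 'a \<Rightarrow> 'q) \<Rightarrow> ('q \<Rightarrow> 'q \<Rightarrow> 'q) \<Rightarrow> ('q \<Rightarrow> 'q) \<Rightarrow> bool" where
  "involutive_AA_quantale l r mult invl \<longleftrightarrow> AA_quantale l r mult \<and>
     (\<forall>X. invl (Sup X) = (SUP x\<in>X. invl x)) \<and> (\<forall>x. invl (invl x) = x) \<and>
     (\<forall>x y. invl (mult x y) = mult (invl y) (invl x)) \<and>
     (\<forall>a x b. invl (l a (r x b)) = l b (r (invl x) a))"

definition support ::
  "('a::frame \<Rightarrow> 'q::complete_lattice \<Rightarrow> 'q) \<Rightarrow> ('q \<Rightarrow> 'q \<Rightarrow> 'q) \<Rightarrow> ('q \<Rightarrow> 'q) \<Rightarrow> ('q \<Rightarrow> 'a) \<Rightarrow> bool" where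
  "support l mult invl s \<longleftrightarrow>
     (\<forall>X. s (Sup X) = (SUP x\<in>X. s x)) \<and> s top = top \<and>
     (\<forall>x y. l (s x) y \<le> mult (mult x (invl x)) y) \<and> (\<forall>x. l (s x) x = x)"

definition equivariant_support ::
  "('a::frame \<Rightarrow> 'q::complete_lattice \<Rightarrow> 'q) \<Rightarrow> ('q \<Rightarrow> 'q \<Rightarrow> 'q) \<Rightarrow> ('q \<Rightarrow> 'q) \<Rightarrow> ('q \<Rightarrow> 'a) \<Rightarrow> bool" where
  "equivariant_support l mult invl s \<longleftrightarrow> support l mult invl s \<and> (\<forall>a x. s (l a x) = inf a (s x))"

text \<open>Based quantal frame: the underlying lattice of Q is a frame (type class).\<close>
definition based_quantal_frame ::
  "('a::frame \<Rightarrow> 'q::frame \<Rightarrow> 'q) \<Rightarrow> ('q \<Rightarrow> 'a \<Rightarrow> 'q) \<Rightarrow> ('q \<Rightarrow> 'q \<Rightarrow> 'q) \<Rightarrow> ('q \<Rightarrow> 'q) \<Rightarrow> bool" where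
  "based_quantal_frame l r mult invl \<longleftrightarrow> involutive_AA_quantale l r mult invl \<and>
     (\<forall>a x y. inf (l a x) y = l a (inf x y)) \<and> (\<forall>x a y. inf (r x a) y = r (inf x y) a)"

definition reflexive_bqf ::
  "('a::frame \<Rightarrow> 'q::frame \<Rightarrow> 'q) \<Rightarrow> ('q \<Rightarrow> 'a \<Rightarrow> 'q) \<Rightarrow> ('q \<Rightarrow> 'q \<Rightarrow> 'q) \<Rightarrow> ('q \<Rightarrow> 'q) \<Rightarrow> ('q \<Rightarrow> 'a) \<Rightarrow> bool" where
  "reflexive_bqf l r mult invl ups \<longleftrightarrow> based_quantal_frame l r mult invl \<and> frame_hom ups \<and>
     (\<forall>a. ups (l a top) = a \<and> ups (r top a) = a)"

text \<open>Concrete presentation of the sup-lattice tensor product Q \<otimes> Q (Joyal--Tierney):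
  the subsets of Q \<times> Q that are down-closed and closed under joins in each variable
  separately (with x \<otimes> y \<le> S iff (x,y) \<in> S). The quotient Q \<otimes>_A Q by the relations
  x \<otimes> (a |> y) = (x <| a) \<otimes> y consists of the elements saturated for these relations.\<close>

definition tensA_closed :: "('a::frame \<Rightarrow> 'q::complete_lattice \<Rightarrow> 'q) \<Rightarrow> ('q \<Rightarrow> 'a \<Rightarrow> 'q) \<Rightarrow> ('q \<times> 'q) set \<Rightarrow> bool" where
  "tensA_closed l r S \<longleftrightarrow>
     (\<forall>x y x' y'. (x,y) \<in> S \<longrightarrow> x' \<le> x \<longrightarrow> y' \<le> y \<longrightarrow> (x',y') \<in> S) \<and>
     (\<forall>X y. (\<forall>x\<in>X. (x,y) \<in> S) \<longrightarrow> (Sup X, y) \<in> S) \<and>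
     (\<forall>x Y. (\<forall>y\<in>Y. (x,y) \<in> S) \<longrightarrow> (x, Sup Y) \<in> S) \<and>
     (\<forall>x a y. (x, l a y) \<in> S \<longleftrightarrow> (r x a, y) \<in> S)"

text \<open>O(G_2) = Q \<otimes>_A Q, ordered by inclusion.\<close>
definition OG2 :: "('a::frame \<Rightarrow> 'q::complete_lattice \<Rightarrow> 'q) \<Rightarrow> ('q \<Rightarrow> 'a \<Rightarrow> 'q) \<Rightarrow> ('q \<times> 'q) set set" where
  "OG2 l r = {S. tensA_closed l r S}"

definition Sup2 :: "('a::frame \<Rightarrow> 'q::complete_lattice \<Rightarrow> 'q) \<Rightarrow> ('q \<Rightarrow> 'a \<Rightarrow> 'q) \<Rightarrow> ('q \<times> 'q) set set \<Rightarrow> ('q \<times> 'q) set" where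
  "Sup2 l r SS = \<Inter>{S \<in> OG2 l r. \<Union>SS \<subseteq> S}"

definition tens :: "('a::frame \<Rightarrow> 'q::complete_lattice \<Rightarrow> 'q) \<Rightarrow> ('q \<Rightarrow> 'a \<Rightarrow> 'q) \<Rightarrow> 'q \<Rightarrow> 'q \<Rightarrow> ('q \<times> 'q) set" where
  "tens l r x y = Sup2 l r {{(x,y)}}"

definition tens3_closed :: "('a::frame \<Rightarrow> 'q::complete_lattice \<Rightarrow> 'q) \<Rightarrow> ('q \<Rightarrow> 'a \<Rightarrow> 'q) \<Rightarrow> ('q \<times> 'q \<times> 'q) set \<Rightarrow> bool" where
  "tens3_closed l r S \<longleftrightarrow>
     (\<forall>x y z x' y' z'. (x,y,z) \<in> S \<longrightarrow> x' \<le> x \<longrightarrow> y' \<le> y \<longrightarrow> z' \<le> z \<longrightarrow> (x',y',z') \<in> S) \<and>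
     (\<forall>X y z. (\<forall>x\<in>X. (x,y,z) \<in> S) \<longrightarrow> (Sup X, y, z) \<in> S) \<and>
     (\<forall>x Y z. (\<forall>y\<in>Y. (x,y,z) \<in> S) \<longrightarrow> (x, Sup Y, z) \<in> S) \<and>
     (\<forall>x y Z. (\<forall>z\<in>Z. (x,y,z) \<in> S) \<longrightarrow> (x, y, Sup Z) \<in> S) \<and>
     (\<forall>x a y z. (x, l a y, z) \<in> S \<longleftrightarrow> (r x a, y, z) \<in> S) \<and>
     (\<forall>x y a z. (x, y, l a z) \<in> S \<longleftrightarrow> (x, r y a, z) \<in> S)"

text \<open>O(G_3) = Q \<otimes>_A Q \<otimes>_A Q, the frame of the locale G_3 = G_1 \<times>_{G_0} G_1 \<times>_{G_0} G_1.\<close>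
definition OG3 :: "('a::frame \<Rightarrow> 'q::complete_lattice \<Rightarrow> 'q) \<Rightarrow> ('q \<Rightarrow> 'a \<Rightarrow> 'q) \<Rightarrow> ('q \<times> 'q \<times> 'q) set set" where
  "OG3 l r = {S. tens3_closed l r S}"

definition Sup3 :: "('a::frame \<Rightarrow> 'q::complete_lattice \<Rightarrow> 'q) \<Rightarrow> ('q \<Rightarrow> 'a \<Rightarrow> 'q) \<Rightarrow> ('q \<times> 'q \<times> 'q) set set \<Rightarrow> ('q \<times> 'q \<times> 'q) set" where
  "Sup3 l r SS = \<Inter>{S \<in> OG3 l r. \<Union>SS \<subseteq> S}"

definition tens3 :: "('a::frame \<Rightarrow> 'q::complete_lattice \<Rightarrow> 'q) \<Rightarrow> ('q \<Rightarrow> 'a \<Rightarrow> 'q) \<Rightarrow> 'q \<Rightarrow> 'q \<Rightarrow> 'q \<Rightarrow> ('q \<times> 'q \<times> 'q) set" where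
  "tens3 l r x y z = Sup3 l r {{(x,y,z)}}"

text \<open>mu_A : Q \<otimes>_A Q -> Q, x \<otimes> y |-> xy, and its right adjoint.\<close>
definition muA :: "('q::complete_lattice \<Rightarrow> 'q \<Rightarrow> 'q) \<Rightarrow> ('q \<times> 'q) set \<Rightarrow> 'q" where
  "muA mult S = Sup {mult x y | x y. (x,y) \<in> S}"

definition muA_radj ::
  "('a::frame \<Rightarrow> 'q::complete_lattice \<Rightarrow> 'q) \<Rightarrow> ('q \<Rightarrow> 'a \<Rightarrow> 'q) \<Rightarrow> ('q \<Rightarrow> 'q \<Rightarrow> 'q) \<Rightarrow> 'q \<Rightarrow> ('q \<times> 'q) set" where
  "muA_radj l r mult c = Sup2 l r {S \<in> OG2 l r. muA mult S \<le> c}"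

definition multiplicative ::
  "('a::frame \<Rightarrow> 'q::complete_lattice \<Rightarrow> 'q) \<Rightarrow> ('q \<Rightarrow> 'a \<Rightarrow> 'q) \<Rightarrow> ('q \<Rightarrow> 'q \<Rightarrow> 'q) \<Rightarrow> bool" where
  "multiplicative l r mult \<longleftrightarrow>
     (\<forall>C. muA_radj l r mult (Sup C) = Sup2 l r (muA_radj l r mult ` C))"

definition unit_laws ::
  "('a::frame \<Rightarrow> 'q::complete_lattice \<Rightarrow> 'q) \<Rightarrow> ('q \<Rightarrow> 'q \<Rightarrow> 'q) \<Rightarrow> ('q \<Rightarrow> 'a) \<Rightarrow> bool" where
  "unit_laws l mult ups \<longleftrightarrow> (\<forall>a. Sup {l (ups x) y | x y. mult x y \<le> a} = a)"

definition inverse_law ::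
  "('a::frame \<Rightarrow> 'q::complete_lattice \<Rightarrow> 'q) \<Rightarrow> ('q \<Rightarrow> 'q \<Rightarrow> 'q) \<Rightarrow> ('q \<Rightarrow> 'q) \<Rightarrow> ('q \<Rightarrow> 'a) \<Rightarrow> bool" where
  "inverse_law l mult invl ups \<longleftrightarrow>
     (\<forall>a. l (ups a) top = Sup {inf x y | x y. mult x (invl y) \<le> a})"

definition groupoid_quantale ::
  "('a::frame \<Rightarrow> 'q::frame \<Rightarrow> 'q) \<Rightarrow> ('q \<Rightarrow> 'a \<Rightarrow> 'q) \<Rightarrow> ('q \<Rightarrow> 'q \<Rightarrow> 'q) \<Rightarrow> ('q \<Rightarrow> 'q) \<Rightarrow> ('q \<Rightarrow> 'a) \<Rightarrow> bool" where
  "groupoid_quantale l r mult invl ups \<longleftrightarrow>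
     multiplicative l r mult \<and> (\<exists>s. equivariant_support l mult invl s) \<and>
     reflexive_bqf l r mult invl ups \<and> unit_laws l mult ups \<and> inverse_law l mult invl ups"

definition d_star :: "('a::frame \<Rightarrow> 'q::complete_lattice \<Rightarrow> 'q) \<Rightarrow> 'a \<Rightarrow> 'q" where
  "d_star l a = l a top"

definition i_star :: "('q \<Rightarrow> 'q) \<Rightarrow> 'q \<Rightarrow> 'q" where
  "i_star invl = invl"

text \<open>r = d \<circ> i, hence r* = i* \<circ> d*.\<close>
definition r_star :: "('a::frame \<Rightarrow> 'q::complete_lattice \<Rightarrow> 'q) \<Rightarrow> ('q \<Rightarrow> 'q) \<Rightarrow> 'a \<Rightarrow> 'q" where
  "r_star l invl = i_star invl \<circ> d_star l"

definition u_star :: "('q \<Rightarrow> 'a) \<Rightarrow> 'q \<Rightarrow> 'a" where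
  "u_star ups = ups"

definition m_star ::
  "('a::frame \<Rightarrow> 'q::complete_lattice \<Rightarrow> 'q) \<Rightarrow> ('q \<Rightarrow> 'a \<Rightarrow> 'q) \<Rightarrow> ('q \<Rightarrow> 'q \<Rightarrow> 'q) \<Rightarrow> 'q \<Rightarrow> ('q \<times> 'q) set" where
  "m_star l r mult c = Sup2 l r {tens l r x y | x y. mult x y \<le> c}"

definition pi1_star :: "('a::frame \<Rightarrow> 'q::complete_lattice \<Rightarrow> 'q) \<Rightarrow> ('q \<Rightarrow> 'a \<Rightarrow> 'q) \<Rightarrow> 'q \<Rightarrow> ('q \<times> 'q) set" where
  "pi1_star l r x = tens l r x top"

definition pi2_star :: "('a::frame \<Rightarrow> 'q::complete_lattice \<Rightarrow> 'q) \<Rightarrow> ('q \<Rightarrow> 'a \<Rightarrow> 'q) \<Rightarrow> 'q \<Rightarrow> ('q \<times> 'q) set" where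
  "pi2_star l r y = tens l r top y"

text \<open>Given locale maps f, g : X -> G_1 with r \<circ> f = d \<circ> g, the induced map
  \<langle>f,g\<rangle> : X -> G_2 has inverse image x \<otimes> y |-> f*(x) \<and> g*(y), i.e.
  S |-> \<Or>{f*(x) \<and> g*(y) | (x,y) \<in> S}; here O(X) has join SupX and meet infX.\<close>
definition pair_star :: "('x set \<Rightarrow> 'x) \<Rightarrow> ('x \<Rightarrow> 'x \<Rightarrow> 'x) \<Rightarrow> ('q \<Rightarrow> 'x) \<Rightarrow> ('q \<Rightarrow> 'x) \<Rightarrow> ('q \<times> 'q) set \<Rightarrow> 'x" where
  "pair_star SupX infX f g S = SupX {infX (f x) (g y) | x y. (x,y) \<in> S}"

definition p1_star :: "('a::frame \<Rightarrow> 'q::complete_lattice \<Rightarrow> 'q) \<Rightarrow> ('q \<Rightarrow> 'a \<Rightarrow> 'q) \<Rightarrow> 'q \<Rightarrow> ('q \<times> 'q \<times> 'q) set" where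
  "p1_star l r x = tens3 l r x top top"
definition p2_star :: "('a::frame \<Rightarrow> 'q::complete_lattice \<Rightarrow> 'q) \<Rightarrow> ('q \<Rightarrow> 'a \<Rightarrow> 'q) \<Rightarrow> 'q \<Rightarrow> ('q \<times> 'q \<times> 'q) set" where
  "p2_star l r y = tens3 l r top y top"
definition p3_star :: "('a::frame \<Rightarrow> 'q::complete_lattice \<Rightarrow> 'q) \<Rightarrow> ('q \<Rightarrow> 'a \<Rightarrow> 'q) \<Rightarrow> 'q \<Rightarrow> ('q \<times> 'q \<times> 'q) set" where
  "p3_star l r z = tens3 l r top top z"

definition pair3_star :: "('a::frame \<Rightarrow> 'q::complete_lattice \<Rightarrow> 'q) \<Rightarrow> ('q \<Rightarrow> 'a \<Rightarrow> 'q) \<Rightarrow>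
    ('q \<Rightarrow> ('q \<times> 'q \<times> 'q) set) \<Rightarrow> ('q \<Rightarrow> ('q \<times> 'q \<times> 'q) set) \<Rightarrow> ('q \<times> 'q) set \<Rightarrow> ('q \<times> 'q \<times> 'q) set" where
  "pair3_star l r f g = pair_star (Sup3 l r) (\<inter>) f g"

text \<open>p_12 = \<langle>p_1,p_2\<rangle>, p_23 = \<langle>p_2,p_3\<rangle> : G_3 -> G_2;
  m \<times> id = \<langle>m \<circ> p_12, p_3\<rangle> and id \<times> m = \<langle>p_1, m \<circ> p_23\<rangle> : G_3 -> G_2.\<close>
definition m_x_id_star :: "('a::frame \<Rightarrow> 'q::complete_lattice \<Rightarrow> 'q) \<Rightarrow> ('q \<Rightarrow> 'a \<Rightarrow> 'q) \<Rightarrow> ('q \<Rightarrow> 'q \<Rightarrow> 'q) \<Rightarrow>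
    ('q \<times> 'q) set \<Rightarrow> ('q \<times> 'q \<times> 'q) set" where
  "m_x_id_star l r mult = pair3_star l r
     (pair3_star l r (p1_star l r) (p2_star l r) \<circ> m_star l r mult) (p3_star l r)"

definition id_x_m_star :: "('a::frame \<Rightarrow> 'q::complete_lattice \<Rightarrow> 'q) \<Rightarrow> ('q \<Rightarrow> 'a \<Rightarrow> 'q) \<Rightarrow> ('q \<Rightarrow> 'q \<Rightarrow> 'q) \<Rightarrow>
    ('q \<times> 'q) set \<Rightarrow> ('q \<times> 'q \<times> 'q) set" where
  "id_x_m_star l r mult = pair3_star l r (p1_star l r)
     (pair3_star l r (p2_star l r) (p3_star l r) \<circ> m_star l r mult)"

text \<open>All equations are between inverse image homomorphisms, so composites reverse:
  (g \<circ> f)* = f* \<circ> g*.\<close>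
definition assoc_graph_is_localic_groupoid ::
  "('a::frame \<Rightarrow> 'q::frame \<Rightarrow> 'q) \<Rightarrow> ('q \<Rightarrow> 'a \<Rightarrow> 'q) \<Rightarrow> ('q \<Rightarrow> 'q \<Rightarrow> 'q) \<Rightarrow> ('q \<Rightarrow> 'q) \<Rightarrow> ('q \<Rightarrow> 'a) \<Rightarrow> bool" where
  "assoc_graph_is_localic_groupoid l r mult invl ups \<longleftrightarrow>
     (let d = d_star l; rr = r_star l invl; i = i_star invl; u = u_star ups; m = m_star l r mult;
          pair2 = pair_star Sup inf in
     \<comment> \<open>d, r, i, u, m are locale maps\<close>
     frame_hom d \<and> frame_hom rr \<and> frame_hom i \<and> frame_hom u \<and>
     frame_hom_into (OG2 l r) (Sup2 l r) (\<inter>) UNIV m \<and>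
     \<comment> \<open>G_2 is the pullback of r and d\<close>
     frame_hom_into (OG2 l r) (Sup2 l r) (\<inter>) UNIV (pi1_star l r) \<and>
     frame_hom_into (OG2 l r) (Sup2 l r) (\<inter>) UNIV (pi2_star l r) \<and>
     pi1_star l r \<circ> rr = pi2_star l r \<circ> d \<and>
     \<comment> \<open>involution: i \<circ> i = id, d \<circ> i = r, r \<circ> i = d\<close>
     i \<circ> i = id \<and> i \<circ> d = rr \<and> i \<circ> rr = d \<and>
     \<comment> \<open>d \<circ> u = id, r \<circ> u = id\<close>
     u \<circ> d = id \<and> u \<circ> rr = id \<and>
     \<comment> \<open>d \<circ> m = d \<circ> pi_1, r \<circ> m = r \<circ> pi_2\<close>
     m \<circ> d = pi1_star l r \<circ> d \<and> m \<circ> rr = pi2_star l r \<circ> rr \<and>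
     \<comment> \<open>associativity: m \<circ> (m \<times> id) = m \<circ> (id \<times> m) : G_3 -> G_1\<close>
     m_x_id_star l r mult \<circ> m = id_x_m_star l r mult \<circ> m \<and>
     \<comment> \<open>unit laws: m \<circ> \<langle>u \<circ> d, id\<rangle> = id = m \<circ> \<langle>id, u \<circ> r\<rangle>\<close>
     pair2 (d \<circ> u) id \<circ> m = id \<and> pair2 id (rr \<circ> u) \<circ> m = id \<and>
     \<comment> \<open>inverse laws: m \<circ> \<langle>id, i\<rangle> = u \<circ> d, m \<circ> \<langle>i, id\<rangle> = u \<circ> r\<close>
     pair2 id i \<circ> m = d \<circ> u \<and> pair2 i id \<circ> m = rr \<circ> u)"

definition assoc_graph_is_open_localic_groupoid ::
  "('a::frame \<Rightarrow> 'q::frame \<Rightarrow> 'q) \<Rightarrow> ('q \<Rightarrow> 'a \<Rightarrow> 'q) \<Rightarrow> ('q \<Rightarrow> 'q \<Rightarrow> 'q) \<Rightarrow> ('q \<Rightarrow> 'q) \<Rightarrow> ('q \<Rightarrow> 'a) \<Rightarrow> bool" where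
  "assoc_graph_is_open_localic_groupoid l r mult invl ups \<longleftrightarrow>
     assoc_graph_is_localic_groupoid l r mult invl ups \<and> open_map (d_star l)"

end

theory Submission
  imports Defs
begin

text \<open>The opens of \<open>G\<^sub>2 = Q \<otimes>\<^sub>A Q\<close> occurring in the groupoid axioms have concrete
  descriptions: \<open>m*(c)\<close> consists of the pairs \<open>(x, y)\<close> with \<open>xy \<le> c\<close>, and \<open>\<pi>\<^sub>1*(x)\<close>,
  \<open>\<pi>\<^sub>2*(y)\<close> of the pairs \<open>(x', y')\<close> with \<open>x' \<triangleleft> \<sigma>(y') \<le> x\<close>, resp.
  \<open>\<sigma>(x'*) \<triangleright> y' \<le> y\<close>. Both rest on the stability law \<open>\<sigma>(xy) = \<sigma>(x \<triangleleft> \<sigma>(y))\<close> of the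
  equivariant support, and they turn the axioms of a localic groupoid into statements about \<open>Q\<close>:
  the unit and inverse laws of \<open>Q\<close> give those of \<open>G\<close>, and associativity comes from the
  factorisation \<open>xy = (x \<triangleleft> \<sigma>(y)) (\<sigma>((x \<triangleleft> \<sigma>(y))*) \<triangleright> y)\<close>. The domain map is open
  because \<open>\<sigma>\<close> is left adjoint to \<open>d*\<close>, and equivariance of \<open>\<sigma>\<close> is Frobenius reciprocity.\<close>

lemma mono_if_Sup_preserving:
  fixes f :: "'a::complete_lattice \<Rightarrow> 'b::complete_lattice"
  assumes "\<And>X. f (Sup X) = (SUP x\<in>X. f x)"
  shows "mono f"
proof
  fix x y :: 'a
  assume "x \<le> y"
  then have "f y = sup (f x) (f y)" using assms[of "{x, y}"] by (simp add: sup_absorb2)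
  then show "f x \<le> f y" by (metis sup.cobounded1)
qed

lemma frame_hom_comp: "frame_hom f \<Longrightarrow> frame_hom g \<Longrightarrow> frame_hom (g \<circ> f)"
  unfolding frame_hom_def frame_hom_into_def by (simp add: image_comp)

section \<open>Concrete tensor products\<close>

lemma
  assumes "tensA_closed l r S"
  shows tensA_closed_downward: "(x, y) \<in> S \<Longrightarrow> x' \<le> x \<Longrightarrow> y' \<le> y \<Longrightarrow> (x', y') \<in> S"
    and tensA_closed_Sup_left: "(\<And>x. x \<in> X \<Longrightarrow> (x, y) \<in> S) \<Longrightarrow> (Sup X, y) \<in> S"
    and tensA_closed_Sup_right: "(\<And>y. y \<in> Y \<Longrightarrow> (x, y) \<in> S) \<Longrightarrow> (x, Sup Y) \<in> S"
    and tensA_closed_balanced: "(x, l a y) \<in> S \<longleftrightarrow> (r x a, y) \<in> S"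
  using assms unfolding tensA_closed_def by simp_all

lemma tens3_closed_downward:
  "tens3_closed l r S \<Longrightarrow> (x, y, z) \<in> S \<Longrightarrow> x' \<le> x \<Longrightarrow> y' \<le> y \<Longrightarrow> z' \<le> z \<Longrightarrow> (x', y', z') \<in> S"
  unfolding tens3_closed_def by simp

lemma tensA_closed_Inter:
  assumes "\<And>S. S \<in> F \<Longrightarrow> tensA_closed l r S"
  shows "tensA_closed l r (\<Inter>F)"
  using assms unfolding tensA_closed_def Inter_iff
  by (intro conjI allI impI ballI) meson+

lemma tens3_closed_Inter:
  assumes "\<And>S. S \<in> F \<Longrightarrow> tens3_closed l r S"
  shows "tens3_closed l r (\<Inter>F)"
  using assms unfolding tens3_closed_def Inter_iff
  by (intro conjI allI impI ballI) meson+

lemma tensA_closed_Sup2: "tensA_closed l r (Sup2 l r SS)"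
  unfolding Sup2_def OG2_def by (rule tensA_closed_Inter) simp

lemma Sup2_upper: "A \<in> SS \<Longrightarrow> A \<subseteq> Sup2 l r SS"
  unfolding Sup2_def by blast

lemma mem_Sup2I: "p \<in> A \<Longrightarrow> A \<in> SS \<Longrightarrow> p \<in> Sup2 l r SS"
  using Sup2_upper by blast

lemma Sup2_least: "tensA_closed l r T \<Longrightarrow> (\<And>A. A \<in> SS \<Longrightarrow> A \<subseteq> T) \<Longrightarrow> Sup2 l r SS \<subseteq> T"
  unfolding Sup2_def OG2_def by blast

lemma tens3_closed_Sup3: "tens3_closed l r (Sup3 l r SS)"
  unfolding Sup3_def OG3_def by (rule tens3_closed_Inter) simp

lemma Sup3_upper: "A \<in> SS \<Longrightarrow> A \<subseteq> Sup3 l r SS"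
  unfolding Sup3_def by blast

lemma mem_Sup3I: "p \<in> A \<Longrightarrow> A \<in> SS \<Longrightarrow> p \<in> Sup3 l r SS"
  using Sup3_upper by blast

lemma Sup3_least: "tens3_closed l r T \<Longrightarrow> (\<And>A. A \<in> SS \<Longrightarrow> A \<subseteq> T) \<Longrightarrow> Sup3 l r SS \<subseteq> T"
  unfolding Sup3_def OG3_def by blast

lemma tensA_closed_tens: "tensA_closed l r (tens l r x y)"
  unfolding tens_def by (rule tensA_closed_Sup2)

lemma mem_tens: "(x, y) \<in> tens l r x y"
  unfolding tens_def using Sup2_upper[of "{(x, y)}"] by blast

lemma tens_least: "tensA_closed l r T \<Longrightarrow> (x, y) \<in> T \<Longrightarrow> tens l r x y \<subseteq> T"
  unfolding tens_def by (rule Sup2_least) auto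

lemma tens3_closed_tens3: "tens3_closed l r (tens3 l r x y z)"
  unfolding tens3_def by (rule tens3_closed_Sup3)

lemma mem_tens3: "(x, y, z) \<in> tens3 l r x y z"
  unfolding tens3_def using Sup3_upper[of "{(x, y, z)}"] by blast

lemma tens3_least: "tens3_closed l r T \<Longrightarrow> (x, y, z) \<in> T \<Longrightarrow> tens3 l r x y z \<subseteq> T"
  unfolding tens3_def by (rule Sup3_least) auto

lemma tens_balanced: "tens l r (r x a) y = tens l r x (l a y)"
proof
  show "tens l r (r x a) y \<subseteq> tens l r x (l a y)"
    by (rule tens_least[OF tensA_closed_tens tensA_closed_balanced[OF tensA_closed_tens, THEN iffD1, OF mem_tens]])
  show "tens l r x (l a y) \<subseteq> tens l r (r x a) y"
    by (rule tens_least[OF tensA_closed_tens tensA_closed_balanced[OF tensA_closed_tens, THEN iffD2, OF mem_tens]])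
qed

lemma tens_Sup_left: "tens l r (Sup X) y = Sup2 l r ((\<lambda>x. tens l r x y) ` X)"
proof
  have "(x, y) \<in> Sup2 l r ((\<lambda>x. tens l r x y) ` X)" if "x \<in> X" for x
    using that by (intro mem_Sup2I[OF mem_tens[of x y l r]]) simp
  then show "tens l r (Sup X) y \<subseteq> Sup2 l r ((\<lambda>x. tens l r x y) ` X)"
    by (intro tens_least tensA_closed_Sup2 tensA_closed_Sup_left[OF tensA_closed_Sup2])
  have "tens l r x y \<subseteq> tens l r (Sup X) y" if "x \<in> X" for x
    using that by (intro tens_least tensA_closed_tens)
      (auto intro: tensA_closed_downward[OF tensA_closed_tens mem_tens] Sup_upper)
  then show "Sup2 l r ((\<lambda>x. tens l r x y) ` X) \<subseteq> tens l r (Sup X) y"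
    by (intro Sup2_least tensA_closed_tens) blast
qed

lemma tens_Sup_right: "tens l r x (Sup Y) = Sup2 l r ((\<lambda>y. tens l r x y) ` Y)"
proof
  have "(x, y) \<in> Sup2 l r ((\<lambda>y. tens l r x y) ` Y)" if "y \<in> Y" for y
    using that by (intro mem_Sup2I[OF mem_tens[of x y l r]]) simp
  then show "tens l r x (Sup Y) \<subseteq> Sup2 l r ((\<lambda>y. tens l r x y) ` Y)"
    by (intro tens_least tensA_closed_Sup2 tensA_closed_Sup_right[OF tensA_closed_Sup2])
  have "tens l r x y \<subseteq> tens l r x (Sup Y)" if "y \<in> Y" for y
    using that by (intro tens_least tensA_closed_tens)
      (auto intro: tensA_closed_downward[OF tensA_closed_tens mem_tens] Sup_upper)
  then show "Sup2 l r ((\<lambda>y. tens l r x y) ` Y) \<subseteq> tens l r x (Sup Y)"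
    by (intro Sup2_least tensA_closed_tens) blast
qed

lemma tensA_closed_Collect_le:
  fixes f :: "'q::complete_lattice \<Rightarrow> 'q \<Rightarrow> 'c::complete_lattice"
  assumes Sup_left: "\<And>X y. f (Sup X) y = (SUP x\<in>X. f x y)"
    and Sup_right: "\<And>x Y. f x (Sup Y) = (SUP y\<in>Y. f x y)"
    and balanced: "\<And>x a y. f x (l a y) = f (r x a) y"
  shows "tensA_closed l r {(x, y). f x y \<le> c}"
proof -
  have "mono (\<lambda>x. f x y)" "mono (\<lambda>y. f x y)" for x y
    by (auto intro: mono_if_Sup_preserving simp: Sup_left Sup_right)
  then have mono_f: "f x' y' \<le> f x y" if "x' \<le> x" "y' \<le> y" for x y x' y'
    by (meson monoD order_trans that)
  then show ?thesis
    unfolding tensA_closed_def by (auto simp: Sup_left Sup_right balanced SUP_le_iff intro: order_trans[OF mono_f])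
qed

lemma tens3_closed_Collect_le:
  fixes f :: "'q::complete_lattice \<Rightarrow> 'q \<Rightarrow> 'q \<Rightarrow> 'c::complete_lattice"
  assumes Sup_1: "\<And>X y z. f (Sup X) y z = (SUP x\<in>X. f x y z)"
    and Sup_2: "\<And>x Y z. f x (Sup Y) z = (SUP y\<in>Y. f x y z)"
    and Sup_3: "\<And>x y Z. f x y (Sup Z) = (SUP z\<in>Z. f x y z)"
    and balanced_12: "\<And>x a y z. f x (l a y) z = f (r x a) y z"
    and balanced_23: "\<And>x y a z. f x y (l a z) = f x (r y a) z"
  shows "tens3_closed l r {(x, y, z). f x y z \<le> c}"
proof -
  have "mono (\<lambda>x. f x y z)" "mono (\<lambda>y. f x y z)" "mono (\<lambda>z. f x y z)" for x y z
    by (auto intro: mono_if_Sup_preserving simp: Sup_1 Sup_2 Sup_3)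
  then have mono_f: "f x' y' z' \<le> f x y z" if "x' \<le> x" "y' \<le> y" "z' \<le> z" for x y z x' y' z'
    by (meson monoD order_trans that)
  then show ?thesis
    unfolding tens3_closed_def
    by (auto simp: Sup_1 Sup_2 Sup_3 balanced_12 balanced_23 SUP_le_iff intro: order_trans[OF mono_f])
qed

lemma pair3_star_least:
  assumes "tens3_closed l r T" "\<And>x y. (x, y) \<in> S \<Longrightarrow> f x \<inter> g y \<subseteq> T"
  shows "pair3_star l r f g S \<subseteq> T"
  unfolding pair3_star_def pair_star_def using assms by (intro Sup3_least) auto

lemma mem_pair3_star:
  assumes "(x, y) \<in> S" "p \<in> f x" "p \<in> g y"
  shows "p \<in> pair3_star l r f g S"
  unfolding pair3_star_def pair_star_def using assms by (intro mem_Sup3I[of p "f x \<inter> g y"]) auto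

lemma mem_p1_p2_p3_star: "(x, y, z) \<in> p1_star l r x \<inter> p2_star l r y \<inter> p3_star l r z"
  unfolding p1_star_def p2_star_def p3_star_def
  by (intro IntI tens3_closed_downward[OF tens3_closed_tens3 mem_tens3] order_refl top_greatest)

locale supported_quantal_frame =
  fixes lact :: "'a::frame \<Rightarrow> 'q::frame \<Rightarrow> 'q"
    and ract :: "'q \<Rightarrow> 'a \<Rightarrow> 'q"
    and mult :: "'q \<Rightarrow> 'q \<Rightarrow> 'q"
    and invl :: "'q \<Rightarrow> 'q"
    and s :: "'q \<Rightarrow> 'a"
  assumes based_quantal_frame: "based_quantal_frame lact ract mult invl"
    and equivariant_support: "equivariant_support lact mult invl s"
begin

lemma
  shows lact_Sup_left: "lact (Sup A) x = (SUP a\<in>A. lact a x)"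
    and lact_Sup_right: "lact a (Sup X) = (SUP x\<in>X. lact a x)"
    and ract_Sup_left: "ract (Sup X) a = (SUP x\<in>X. ract x a)"
    and ract_Sup_right: "ract x (Sup A) = (SUP a\<in>A. ract x a)"
    and lact_top: "lact top x = x"
    and lact_inf: "lact (inf a b) x = lact a (lact b x)"
    and ract_top: "ract x top = x"
    and ract_inf: "ract x (inf a b) = ract (ract x a) b"
    and ract_lact: "ract (lact a x) b = lact a (ract x b)"
    and mult_assoc: "mult (mult x y) z = mult x (mult y z)"
    and mult_Sup_left: "mult (Sup X) y = (SUP x\<in>X. mult x y)"
    and mult_Sup_right: "mult x (Sup Y) = (SUP y\<in>Y. mult x y)"
    and mult_lact: "mult (lact a x) y = lact a (mult x y)"
    and mult_ract: "mult (ract x a) y = mult x (lact a y)"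
    and ract_mult: "ract (mult x y) a = mult x (ract y a)"
    and invl_Sup: "invl (Sup X) = (SUP x\<in>X. invl x)"
    and invl_invl: "invl (invl x) = x"
    and invl_mult: "invl (mult x y) = mult (invl y) (invl x)"
    and invl_lact_ract: "invl (lact a (ract x b)) = lact b (ract (invl x) a)"
    and inf_lact: "inf (lact a x) y = lact a (inf x y)"
    and inf_ract: "inf (ract x a) y = ract (inf x y) a"
    and s_Sup: "s (Sup X) = (SUP x\<in>X. s x)"
    and s_top: "s top = top"
    and lact_s_le: "lact (s x) y \<le> mult (mult x (invl x)) y"
    and lact_s_self: "lact (s x) x = x"
    and s_lact: "s (lact a x) = inf a (s x)"
  using based_quantal_frame equivariant_support
  unfolding based_quantal_frame_def involutive_AA_quantale_def AA_quantale_def AA_bimodule_def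
    equivariant_support_def support_def
  by meson+

lemma mono_lact_left: "a \<le> b \<Longrightarrow> lact a x \<le> lact b x"
  using mono_if_Sup_preserving[of "\<lambda>a. lact a x"] lact_Sup_left unfolding mono_def by blast

lemma mono_lact_right: "x \<le> y \<Longrightarrow> lact a x \<le> lact a y"
  using mono_if_Sup_preserving[of "lact a"] lact_Sup_right unfolding mono_def by blast

lemma mono_ract_right: "a \<le> b \<Longrightarrow> ract x a \<le> ract x b"
  using mono_if_Sup_preserving[of "ract x"] ract_Sup_right unfolding mono_def by blast

lemma mono_mult_left: "x \<le> y \<Longrightarrow> mult x z \<le> mult y z"
  using mono_if_Sup_preserving[of "\<lambda>x. mult x z"] mult_Sup_left unfolding mono_def by blast

lemma mono_mult_right: "x \<le> y \<Longrightarrow> mult z x \<le> mult z y"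
  using mono_if_Sup_preserving[of "mult z"] mult_Sup_right unfolding mono_def by blast

lemma mono_invl: "x \<le> y \<Longrightarrow> invl x \<le> invl y"
  using mono_if_Sup_preserving[of "invl"] invl_Sup unfolding mono_def by blast

lemma mono_s: "x \<le> y \<Longrightarrow> s x \<le> s y"
  using mono_if_Sup_preserving[of "s"] s_Sup unfolding mono_def by blast

lemma lact_le: "lact a x \<le> x"
  using mono_lact_left[of a top x] by (simp add: lact_top)

lemma ract_le: "ract x a \<le> x"
  using mono_ract_right[of a top x] by (simp add: ract_top)

lemma invl_le_iff: "invl x \<le> invl y \<longleftrightarrow> x \<le> y"
  by (metis mono_invl invl_invl)

lemma invl_eq_iff: "invl x = invl y \<longleftrightarrow> x = y"
  by (metis invl_invl)

lemma invl_top: "invl top = top"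
  by (metis invl_invl mono_invl top.extremum top.extremum_unique)

lemma invl_inf: "invl (inf x y) = inf (invl x) (invl y)"
proof (rule antisym)
  show "invl (inf x y) \<le> inf (invl x) (invl y)" by (simp add: mono_invl)
  have "invl (inf (invl x) (invl y)) \<le> inf x y"
    by (metis inf_le1 inf_le2 invl_invl mono_invl le_inf_iff)
  then show "inf (invl x) (invl y) \<le> invl (inf x y)"
    by (metis invl_le_iff invl_invl)
qed

lemma invl_lact: "invl (lact a x) = ract (invl x) a"
  using invl_lact_ract[of a x top] by (simp add: ract_top lact_top)

lemma invl_ract: "invl (ract x a) = lact a (invl x)"
  using invl_lact_ract[of top x a] by (simp add: ract_top lact_top)

lemma inf_lact_top: "inf (lact a top) x = lact a x"
  by (simp add: inf_lact)

lemma lact_commute: "lact a (lact b x) = lact b (lact a x)"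
  by (metis lact_inf inf_commute)

lemma s_le_iff: "s x \<le> a \<longleftrightarrow> x \<le> lact a top"
proof
  assume "s x \<le> a"
  then have "lact (s x) x \<le> lact a top" by (meson mono_lact_left mono_lact_right order_trans top_greatest)
  then show "x \<le> lact a top" by (simp add: lact_s_self)
next
  assume "x \<le> lact a top"
  then have "s x \<le> s (lact a top)" by (rule mono_s)
  then show "s x \<le> a" by (simp add: s_lact s_top)
qed

lemma ract_s_invl_self: "ract x (s (invl x)) = x"
  by (metis invl_lact invl_invl lact_s_self)

lemma mult_ract_s: "mult (ract x (s y)) y = mult x y"
  by (simp add: mult_ract lact_s_self)

lemma mult_lact_s_invl: "mult x (lact (s (invl x)) y) = mult x y"
  by (metis mult_ract ract_s_invl_self)

lemma s_mult_le: "s (mult x y) \<le> s x"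
proof -
  have "mult x y = lact (s x) (mult x y)" by (metis mult_lact lact_s_self)
  also have "\<dots> \<le> lact (s x) top" by (simp add: mono_lact_right)
  finally show ?thesis by (simp add: s_le_iff)
qed

lemma s_mult: "s (mult x y) = s (ract x (s y))"
proof (rule antisym)
  show "s (mult x y) \<le> s (ract x (s y))" by (metis mult_ract_s s_mult_le)
  have "invl (lact (s y) (invl x)) \<le> invl (mult (mult y (invl y)) (invl x))"
    using lact_s_le mono_invl by blast
  then have "ract x (s y) \<le> mult (mult x y) (invl y)"
    by (simp add: invl_lact invl_mult invl_invl mult_assoc)
  then have "s (ract x (s y)) \<le> s (mult (mult x y) (invl y))" by (rule mono_s)
  also have "\<dots> \<le> s (mult x y)" by (rule s_mult_le)
  finally show "s (ract x (s y)) \<le> s (mult x y)" .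
qed

lemma s_invl_mult: "s (invl (mult x y)) = s (invl (lact (s (invl x)) y))"
  by (simp add: invl_mult s_mult invl_lact)

lemma s_invl_ract: "s (invl (ract x a)) = inf a (s (invl x))"
  by (simp add: invl_ract s_lact)

lemma mult_le_mult_by_support:
  assumes "ract x (s y) \<le> u" and "lact (s (invl x)) y \<le> v"
  shows "mult x y \<le> mult u v"
proof -
  let ?x' = "ract x (s y)"
  have "lact (s (invl ?x')) y \<le> lact (s (invl x)) y"
    by (simp add: s_invl_ract mono_lact_left)
  then have "lact (s (invl ?x')) y \<le> v" using assms(2) by (rule order_trans)
  have "mult x y = mult ?x' (lact (s (invl ?x')) y)"
    by (simp add: mult_ract_s mult_lact_s_invl)
  also have "\<dots> \<le> mult u v"
    using assms(1) \<open>lact (s (invl ?x')) y \<le> v\<close> by (meson mono_mult_left mono_mult_right order_trans)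
  finally show ?thesis .
qed

lemma inf_invl_lact_top: "inf x (invl (lact a top)) = ract x a"
  by (metis inf_commute inf_ract inf_top_left invl_lact invl_top)

lemma le_invl_lact_top_iff: "x \<le> invl (lact a top) \<longleftrightarrow> s (invl x) \<le> a"
  by (metis invl_le_iff invl_invl s_le_iff)

lemma frame_hom_d_star: "frame_hom (d_star lact)"
  unfolding frame_hom_def frame_hom_into_def d_star_def
  by (simp add: lact_Sup_left lact_top lact_inf inf_lact_top)

lemma frame_hom_i_star: "frame_hom (i_star invl)"
  unfolding frame_hom_def frame_hom_into_def i_star_def
  by (simp add: invl_Sup invl_inf invl_top)

lemma frame_hom_r_star: "frame_hom (r_star lact invl)"
  unfolding r_star_def using frame_hom_d_star frame_hom_i_star by (rule frame_hom_comp)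

lemma tensA_closed_mult_le: "tensA_closed lact ract {(x, y). mult x y \<le> c}"
  by (rule tensA_closed_Collect_le) (simp_all add: mult_Sup_left mult_Sup_right mult_ract)

lemma m_star_eq: "m_star lact ract mult c = {(x, y). mult x y \<le> c}"
proof
  show "m_star lact ract mult c \<subseteq> {(x, y). mult x y \<le> c}"
    unfolding m_star_def
  proof (rule Sup2_least[OF tensA_closed_mult_le])
    fix A assume "A \<in> {tens lact ract x y | x y. mult x y \<le> c}"
    then obtain x y where "A = tens lact ract x y" "mult x y \<le> c" by blast
    then show "A \<subseteq> {(x, y). mult x y \<le> c}" by (simp add: tens_least[OF tensA_closed_mult_le])
  qed
  show "{(x, y). mult x y \<le> c} \<subseteq> m_star lact ract mult c"
    unfolding m_star_def by (auto intro!: mem_Sup2I[OF mem_tens])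
qed

lemma muA_radj_eq: "muA_radj lact ract mult c = {(x, y). mult x y \<le> c}"
proof
  show "muA_radj lact ract mult c \<subseteq> {(x, y). mult x y \<le> c}"
    unfolding muA_radj_def
  proof (rule Sup2_least[OF tensA_closed_mult_le])
    fix S assume "S \<in> {S \<in> OG2 lact ract. muA mult S \<le> c}"
    then have "muA mult S \<le> c" by simp
    moreover have "mult x y \<le> muA mult S" if "(x, y) \<in> S" for x y
      unfolding muA_def using that by (intro Sup_upper) blast
    ultimately have "mult x y \<le> c" if "(x, y) \<in> S" for x y
      using that by (meson order_trans)
    then show "S \<subseteq> {(x, y). mult x y \<le> c}" by auto
  qed
  have "muA mult {(x, y). mult x y \<le> c} \<le> c"
    unfolding muA_def by (auto intro: Sup_least)
  then show "{(x, y). mult x y \<le> c} \<subseteq> muA_radj lact ract mult c"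
    unfolding muA_radj_def OG2_def by (intro Sup2_upper) (simp add: tensA_closed_mult_le)
qed

lemma pair_star_m_star:
  "pair_star Sup inf f g (m_star lact ract mult c) = Sup {inf (f x) (g y) | x y. mult x y \<le> c}"
  by (simp add: pair_star_def m_star_eq)

lemma pi1_star_eq: "pi1_star lact ract x = {(x', y'). ract x' (s y') \<le> x}"
proof
  have closed: "tensA_closed lact ract {(x', y'). ract x' (s y') \<le> x}"
    by (rule tensA_closed_Collect_le) (simp_all add: ract_Sup_left s_Sup ract_Sup_right image_image s_lact ract_inf)
  show "pi1_star lact ract x \<subseteq> {(x', y'). ract x' (s y') \<le> x}"
    unfolding pi1_star_def by (rule tens_least[OF closed]) (simp add: ract_le)
  show "{(x', y'). ract x' (s y') \<le> x} \<subseteq> pi1_star lact ract x"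
  proof clarify
    fix x' y' assume "ract x' (s y') \<le> x"
    then have "(ract x' (s y'), y') \<in> tens lact ract x top"
      by (rule tensA_closed_downward[OF tensA_closed_tens mem_tens]) simp
    then have "(x', lact (s y') y') \<in> tens lact ract x top"
      by (rule tensA_closed_balanced[OF tensA_closed_tens, THEN iffD2])
    then show "(x', y') \<in> pi1_star lact ract x" by (simp add: pi1_star_def lact_s_self)
  qed
qed

lemma pi2_star_eq: "pi2_star lact ract y = {(x', y'). lact (s (invl x')) y' \<le> y}"
proof
  have closed: "tensA_closed lact ract {(x', y'). lact (s (invl x')) y' \<le> y}"
    by (rule tensA_closed_Collect_le)
      (simp_all add: invl_Sup s_Sup lact_Sup_left lact_Sup_right image_image s_invl_ract lact_inf lact_commute)
  show "pi2_star lact ract y \<subseteq> {(x', y'). lact (s (invl x')) y' \<le> y}"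
    unfolding pi2_star_def by (rule tens_least[OF closed]) (simp add: lact_le)
  show "{(x', y'). lact (s (invl x')) y' \<le> y} \<subseteq> pi2_star lact ract y"
  proof clarify
    fix x' y' assume "lact (s (invl x')) y' \<le> y"
    then have "(x', lact (s (invl x')) y') \<in> tens lact ract top y"
      by (rule tensA_closed_downward[OF tensA_closed_tens mem_tens, rotated]) simp
    then have "(ract x' (s (invl x')), y') \<in> tens lact ract top y"
      by (rule tensA_closed_balanced[OF tensA_closed_tens, THEN iffD1])
    then show "(x', y') \<in> pi2_star lact ract y" by (simp add: pi2_star_def ract_s_invl_self)
  qed
qed

lemma frame_hom_into_pi1_star: "frame_hom_into (OG2 lact ract) (Sup2 lact ract) (\<inter>) UNIV (pi1_star lact ract)"
  unfolding frame_hom_into_def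
proof (intro conjI allI)
  show "pi1_star lact ract x \<in> OG2 lact ract" for x
    by (simp add: OG2_def pi1_star_def tensA_closed_tens)
  show "pi1_star lact ract (Sup X) = Sup2 lact ract (pi1_star lact ract ` X)" for X
    by (simp add: pi1_star_def[abs_def] tens_Sup_left)
  show "pi1_star lact ract (inf x y) = pi1_star lact ract x \<inter> pi1_star lact ract y" for x y
    by (auto simp: pi1_star_eq)
  show "pi1_star lact ract top = UNIV"
    by (simp add: pi1_star_eq)
qed

lemma frame_hom_into_pi2_star: "frame_hom_into (OG2 lact ract) (Sup2 lact ract) (\<inter>) UNIV (pi2_star lact ract)"
  unfolding frame_hom_into_def
proof (intro conjI allI)
  show "pi2_star lact ract y \<in> OG2 lact ract" for y
    by (simp add: OG2_def pi2_star_def tensA_closed_tens)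
  show "pi2_star lact ract (Sup Y) = Sup2 lact ract (pi2_star lact ract ` Y)" for Y
    by (simp add: pi2_star_def[abs_def] tens_Sup_right)
  show "pi2_star lact ract (inf x y) = pi2_star lact ract x \<inter> pi2_star lact ract y" for x y
    by (auto simp: pi2_star_eq)
  show "pi2_star lact ract top = UNIV"
    by (simp add: pi2_star_eq)
qed

lemma pi1_r_star_eq_pi2_d_star: "pi1_star lact ract \<circ> r_star lact invl = pi2_star lact ract \<circ> d_star lact"
proof (rule ext)
  fix a
  have "invl (lact a top) = ract top a" by (simp add: invl_lact invl_top)
  then show "(pi1_star lact ract \<circ> r_star lact invl) a = (pi2_star lact ract \<circ> d_star lact) a"
    by (simp add: pi1_star_def pi2_star_def r_star_def i_star_def d_star_def tens_balanced)
qed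

lemma m_star_d_star: "m_star lact ract mult \<circ> d_star lact = pi1_star lact ract \<circ> d_star lact"
  by (rule ext) (simp add: m_star_eq pi1_star_eq d_star_def s_le_iff[symmetric] s_mult)

lemma m_star_r_star: "m_star lact ract mult \<circ> r_star lact invl = pi2_star lact ract \<circ> r_star lact invl"
  by (rule ext) (simp add: m_star_eq pi2_star_eq r_star_def i_star_def d_star_def le_invl_lact_top_iff s_invl_mult)

lemma open_map_d_star: "open_map (d_star lact)"
  unfolding open_map_def
proof (intro exI[of _ s] conjI allI)
  show "s x \<le> b \<longleftrightarrow> x \<le> d_star lact b" for x b
    by (simp add: d_star_def s_le_iff)
  show "s (inf x (d_star lact b)) = inf (s x) b" for x b
    by (simp add: d_star_def inf_commute[of x] inf_lact_top s_lact inf_commute[of b])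
qed

lemma tens3_closed_mult3_le: "tens3_closed lact ract {(u, v, w). mult (mult u v) w \<le> c}"
  by (rule tens3_closed_Collect_le)
    (simp_all add: mult_Sup_left mult_Sup_right image_image mult_assoc mult_ract mult_lact)

lemma mem_p1_starD:
  assumes "(u', v', w') \<in> p1_star lact ract u"
  shows "ract u' (s (mult v' w')) \<le> u"
proof -
  have "p1_star lact ract u \<subseteq> {(u', v', w'). ract u' (s (mult v' w')) \<le> u}"
    unfolding p1_star_def
    by (rule tens3_least, rule tens3_closed_Collect_le)
      (simp_all add: ract_Sup_left ract_Sup_right mult_Sup_left mult_Sup_right s_Sup image_image
        mult_lact mult_ract s_lact ract_inf ract_le)
  with assms show ?thesis by (auto simp: subset_iff)
qed

lemma mem_p2_starD:
  assumes "(u', v', w') \<in> p2_star lact ract v"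
  shows "lact (s (invl u')) (ract v' (s w')) \<le> v"
proof -
  have "p2_star lact ract v \<subseteq> {(u', v', w'). lact (s (invl u')) (ract v' (s w')) \<le> v}"
    unfolding p2_star_def
    by (rule tens3_least, rule tens3_closed_Collect_le)
      (simp_all add: lact_Sup_left lact_Sup_right ract_Sup_left ract_Sup_right invl_Sup s_Sup image_image
        ract_lact s_invl_ract lact_inf lact_commute s_lact ract_inf invl_top s_top lact_top ract_top)
  with assms show ?thesis by (auto simp: subset_iff)
qed

lemma mem_p3_starD:
  assumes "(u', v', w') \<in> p3_star lact ract w"
  shows "lact (s (invl (mult u' v'))) w' \<le> w"
proof -
  have "p3_star lact ract w \<subseteq> {(u', v', w'). lact (s (invl (mult u' v'))) w' \<le> w}"
    unfolding p3_star_def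
    by (rule tens3_least, rule tens3_closed_Collect_le)
      (simp_all add: lact_Sup_left lact_Sup_right mult_Sup_left mult_Sup_right invl_Sup s_Sup image_image
        mult_ract ract_mult[symmetric] s_invl_ract lact_inf lact_commute lact_le)
  with assms show ?thesis by (auto simp: subset_iff)
qed

lemma pair3_star_p1_p2_m_star_subset:
  "pair3_star lact ract (p1_star lact ract) (p2_star lact ract) (m_star lact ract mult x)
     \<subseteq> {(u, v, w). ract (mult u v) (s w) \<le> x}"
proof (rule pair3_star_least)
  show "tens3_closed lact ract {(u, v, w). ract (mult u v) (s w) \<le> x}"
    by (rule tens3_closed_Collect_le)
      (simp_all add: mult_Sup_left mult_Sup_right ract_Sup_left ract_Sup_right s_Sup image_image
        mult_ract s_lact ract_inf ract_mult)
  fix u v assume "(u, v) \<in> m_star lact ract mult x"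
  then have "mult u v \<le> x" by (simp add: m_star_eq)
  show "p1_star lact ract u \<inter> p2_star lact ract v \<subseteq> {(u, v, w). ract (mult u v) (s w) \<le> x}"
  proof clarify
    fix u' v' w'
    assume p1: "(u', v', w') \<in> p1_star lact ract u" and p2: "(u', v', w') \<in> p2_star lact ract v"
    have "ract (mult u' v') (s w') = mult u' (ract v' (s w'))" by (rule ract_mult)
    also have "\<dots> \<le> mult u v"
      using mem_p1_starD[OF p1] mem_p2_starD[OF p2] by (intro mult_le_mult_by_support) (simp_all add: s_mult)
    also have "\<dots> \<le> x" by fact
    finally show "ract (mult u' v') (s w') \<le> x" .
  qed
qed

lemma pair3_star_p2_p3_m_star_subset:
  "pair3_star lact ract (p2_star lact ract) (p3_star lact ract) (m_star lact ract mult y)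
     \<subseteq> {(u, v, w). lact (s (invl u)) (mult v w) \<le> y}"
proof (rule pair3_star_least)
  show "tens3_closed lact ract {(u, v, w). lact (s (invl u)) (mult v w) \<le> y}"
    by (rule tens3_closed_Collect_le)
      (simp_all add: mult_Sup_left mult_Sup_right lact_Sup_left lact_Sup_right invl_Sup s_Sup image_image
        mult_lact mult_ract s_invl_ract lact_inf lact_commute)
  fix u v assume "(u, v) \<in> m_star lact ract mult y"
  then have "mult u v \<le> y" by (simp add: m_star_eq)
  show "p2_star lact ract u \<inter> p3_star lact ract v \<subseteq> {(u, v, w). lact (s (invl u)) (mult v w) \<le> y}"
  proof clarify
    fix u' v' w'
    assume p2: "(u', v', w') \<in> p2_star lact ract u" and p3: "(u', v', w') \<in> p3_star lact ract v"
    have "lact (s (invl u')) (mult v' w') = mult (lact (s (invl u')) v') w'" by (rule mult_lact[symmetric])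
    also have "\<dots> \<le> mult u v"
      using mem_p2_starD[OF p2] mem_p3_starD[OF p3]
      by (intro mult_le_mult_by_support) (simp_all add: ract_lact s_invl_mult)
    also have "\<dots> \<le> y" by fact
    finally show "lact (s (invl u')) (mult v' w') \<le> y" .
  qed
qed

lemma m_x_id_star_m_star:
  "m_x_id_star lact ract mult (m_star lact ract mult c) = {(u, v, w). mult (mult u v) w \<le> c}"
proof
  show "m_x_id_star lact ract mult (m_star lact ract mult c) \<subseteq> {(u, v, w). mult (mult u v) w \<le> c}"
    unfolding m_x_id_star_def comp_def
  proof (rule pair3_star_least[OF tens3_closed_mult3_le])
    fix x y assume "(x, y) \<in> m_star lact ract mult c"
    then have "mult x y \<le> c" by (simp add: m_star_eq)
    show "pair3_star lact ract (p1_star lact ract) (p2_star lact ract) (m_star lact ract mult x)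
        \<inter> p3_star lact ract y \<subseteq> {(u, v, w). mult (mult u v) w \<le> c}"
    proof clarify
      fix u v w
      assume "(u, v, w) \<in> pair3_star lact ract (p1_star lact ract) (p2_star lact ract) (m_star lact ract mult x)"
        and p3: "(u, v, w) \<in> p3_star lact ract y"
      then have "ract (mult u v) (s w) \<le> x" using pair3_star_p1_p2_m_star_subset by blast
      then have "mult (mult u v) w \<le> mult x y"
        using mem_p3_starD[OF p3] by (rule mult_le_mult_by_support)
      also have "\<dots> \<le> c" by fact
      finally show "mult (mult u v) w \<le> c" .
    qed
  qed
  show "{(u, v, w). mult (mult u v) w \<le> c} \<subseteq> m_x_id_star lact ract mult (m_star lact ract mult c)"
  proof clarify
    fix u v w assume "mult (mult u v) w \<le> c"
    have inner: "(u, v, w) \<in> pair3_star lact ract (p1_star lact ract) (p2_star lact ract) (m_star lact ract mult (mult u v))"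
      by (rule mem_pair3_star[of u v]) (use mem_p1_p2_p3_star[of u v w lact ract] in \<open>auto simp: m_star_eq\<close>)
    show "(u, v, w) \<in> m_x_id_star lact ract mult (m_star lact ract mult c)"
      unfolding m_x_id_star_def comp_def
      by (rule mem_pair3_star[of "mult u v" w])
        (use inner \<open>mult (mult u v) w \<le> c\<close> mem_p1_p2_p3_star[of u v w lact ract] in \<open>auto simp: m_star_eq\<close>)
  qed
qed

lemma id_x_m_star_m_star:
  "id_x_m_star lact ract mult (m_star lact ract mult c) = {(u, v, w). mult (mult u v) w \<le> c}"
proof
  show "id_x_m_star lact ract mult (m_star lact ract mult c) \<subseteq> {(u, v, w). mult (mult u v) w \<le> c}"
    unfolding id_x_m_star_def comp_def
  proof (rule pair3_star_least[OF tens3_closed_mult3_le])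
    fix x y assume "(x, y) \<in> m_star lact ract mult c"
    then have "mult x y \<le> c" by (simp add: m_star_eq)
    show "p1_star lact ract x \<inter> pair3_star lact ract (p2_star lact ract) (p3_star lact ract) (m_star lact ract mult y)
        \<subseteq> {(u, v, w). mult (mult u v) w \<le> c}"
    proof clarify
      fix u v w
      assume p1: "(u, v, w) \<in> p1_star lact ract x"
        and "(u, v, w) \<in> pair3_star lact ract (p2_star lact ract) (p3_star lact ract) (m_star lact ract mult y)"
      then have "lact (s (invl u)) (mult v w) \<le> y" using pair3_star_p2_p3_m_star_subset by blast
      with mem_p1_starD[OF p1] have "mult u (mult v w) \<le> mult x y" by (rule mult_le_mult_by_support)
      also have "\<dots> \<le> c" by fact
      finally show "mult (mult u v) w \<le> c" by (simp add: mult_assoc)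
    qed
  qed
  show "{(u, v, w). mult (mult u v) w \<le> c} \<subseteq> id_x_m_star lact ract mult (m_star lact ract mult c)"
  proof clarify
    fix u v w assume "mult (mult u v) w \<le> c"
    have inner: "(u, v, w) \<in> pair3_star lact ract (p2_star lact ract) (p3_star lact ract) (m_star lact ract mult (mult v w))"
      by (rule mem_pair3_star[of v w]) (use mem_p1_p2_p3_star[of u v w lact ract] in \<open>auto simp: m_star_eq\<close>)
    show "(u, v, w) \<in> id_x_m_star lact ract mult (m_star lact ract mult c)"
      unfolding id_x_m_star_def comp_def
      by (rule mem_pair3_star[of u "mult v w"])
        (use inner \<open>mult (mult u v) w \<le> c\<close> mem_p1_p2_p3_star[of u v w lact ract] in \<open>auto simp: m_star_eq mult_assoc\<close>)
  qed
qed

end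

locale supported_groupoid_quantale = supported_quantal_frame lact ract mult invl s
  for lact :: "'a::frame \<Rightarrow> 'q::frame \<Rightarrow> 'q"
    and ract :: "'q \<Rightarrow> 'a \<Rightarrow> 'q"
    and mult :: "'q \<Rightarrow> 'q \<Rightarrow> 'q"
    and invl :: "'q \<Rightarrow> 'q"
    and s :: "'q \<Rightarrow> 'a" +
  fixes ups :: "'q \<Rightarrow> 'a"
  assumes groupoid_quantale: "groupoid_quantale lact ract mult invl ups"
begin

lemma
  shows multiplicative: "multiplicative lact ract mult"
    and frame_hom_ups: "frame_hom ups"
    and ups_lact_top: "ups (lact a top) = a"
    and ups_ract_top: "ups (ract top a) = a"
    and unit_law: "Sup {lact (ups x) y | x y. mult x y \<le> c} = c"
    and inverse_law: "lact (ups c) top = Sup {inf x y | x y. mult x (invl y) \<le> c}"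
  using groupoid_quantale
  unfolding groupoid_quantale_def reflexive_bqf_def unit_laws_def inverse_law_def
  by simp_all

lemma invl_Sup_Collect: "invl (Sup {f x y | x y. P x y}) = Sup {invl (f x y) | x y. P x y}"
  unfolding invl_Sup by (rule arg_cong[where f = Sup]) blast

lemma Collect_mult_le_invl:
  "{f x y | x y. mult x y \<le> invl c} = {f (invl y) (invl x) | x y. mult x y \<le> c}"
proof -
  have le_iff: "mult x y \<le> invl c \<longleftrightarrow> mult (invl y) (invl x) \<le> c" for x y
    by (metis invl_le_iff invl_invl invl_mult)
  show ?thesis
    by (auto simp: le_iff) (metis invl_invl)+
qed

lemma Sup_inf_invl: "Sup {inf x (invl y) | x y. mult x y \<le> c} = lact (ups c) top"
proof -
  have "{inf x (invl y) | x y. mult x y \<le> c} = {inf x y | x y. mult x (invl y) \<le> c}"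
    by (auto simp: invl_invl) (metis invl_invl)+
  then show ?thesis by (simp add: inverse_law)
qed

lemma ups_invl: "ups (invl c) = ups c"
proof -
  have "lact (ups (invl c)) top = Sup {inf (invl y) x | x y. mult x y \<le> c}"
    by (simp add: Sup_inf_invl[symmetric] Collect_mult_le_invl invl_invl)
  also have "\<dots> = lact (ups c) top"
    by (simp add: Sup_inf_invl[symmetric] inf_commute)
  finally show ?thesis by (metis ups_lact_top)
qed

lemma ract_unit_law: "Sup {ract x (ups y) | x y. mult x y \<le> c} = c"
proof -
  have "invl (Sup {ract x (ups y) | x y. mult x y \<le> c}) = Sup {lact (ups (invl y)) (invl x) | x y. mult x y \<le> c}"
    by (simp add: invl_Sup_Collect invl_ract ups_invl)
  also have "\<dots> = Sup {lact (ups x) y | x y. mult x y \<le> invl c}"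
    by (simp only: Collect_mult_le_invl[of "\<lambda>x y. lact (ups x) y" c])
  also have "\<dots> = invl c"
    by (rule unit_law)
  finally show ?thesis by (simp only: invl_eq_iff)
qed

lemma frame_hom_into_m_star: "frame_hom_into (OG2 lact ract) (Sup2 lact ract) (\<inter>) UNIV (m_star lact ract mult)"
  unfolding frame_hom_into_def
proof (intro conjI allI)
  show "m_star lact ract mult c \<in> OG2 lact ract" for c
    by (simp add: OG2_def m_star_eq tensA_closed_mult_le)
  have "m_star lact ract mult = muA_radj lact ract mult"
    by (simp add: fun_eq_iff m_star_eq muA_radj_eq)
  then show "m_star lact ract mult (Sup C) = Sup2 lact ract (m_star lact ract mult ` C)" for C
    using multiplicative by (simp add: multiplicative_def)
  show "m_star lact ract mult (inf x y) = m_star lact ract mult x \<inter> m_star lact ract mult y" for x y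
    by (auto simp: m_star_eq)
  show "m_star lact ract mult top = UNIV"
    by (simp add: m_star_eq)
qed

lemma assoc_graph_is_open_localic_groupoid: "assoc_graph_is_open_localic_groupoid lact ract mult invl ups"
  unfolding assoc_graph_is_open_localic_groupoid_def assoc_graph_is_localic_groupoid_def Let_def
proof (intro conjI)
  show "i_star invl \<circ> i_star invl = id"
    by (simp add: fun_eq_iff i_star_def invl_invl)
  show "i_star invl \<circ> d_star lact = r_star lact invl"
    by (simp add: r_star_def)
  show "i_star invl \<circ> r_star lact invl = d_star lact"
    by (simp add: fun_eq_iff r_star_def i_star_def invl_invl)
  show "u_star ups \<circ> d_star lact = id"
    by (simp add: fun_eq_iff u_star_def d_star_def ups_lact_top)
  show "u_star ups \<circ> r_star lact invl = id"
    by (simp add: fun_eq_iff u_star_def r_star_def i_star_def d_star_def invl_lact invl_top ups_ract_top)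
  show "m_x_id_star lact ract mult \<circ> m_star lact ract mult = id_x_m_star lact ract mult \<circ> m_star lact ract mult"
    by (simp add: fun_eq_iff m_x_id_star_m_star id_x_m_star_m_star)
  show "pair_star Sup inf (d_star lact \<circ> u_star ups) id \<circ> m_star lact ract mult = id"
    by (simp add: fun_eq_iff pair_star_m_star d_star_def u_star_def inf_lact_top unit_law)
  show "pair_star Sup inf id (r_star lact invl \<circ> u_star ups) \<circ> m_star lact ract mult = id"
    by (simp add: fun_eq_iff pair_star_m_star r_star_def i_star_def d_star_def u_star_def
        inf_invl_lact_top ract_unit_law)
  show "pair_star Sup inf id (i_star invl) \<circ> m_star lact ract mult = d_star lact \<circ> u_star ups"
    by (simp add: fun_eq_iff pair_star_m_star i_star_def d_star_def u_star_def Sup_inf_invl)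
  show "pair_star Sup inf (i_star invl) id \<circ> m_star lact ract mult = r_star lact invl \<circ> u_star ups"
    by (simp add: fun_eq_iff pair_star_m_star i_star_def r_star_def d_star_def u_star_def
        Sup_inf_invl[symmetric] invl_Sup_Collect invl_inf invl_invl)
  show "frame_hom (u_star ups)"
    by (simp add: u_star_def frame_hom_ups)
qed (fact frame_hom_d_star frame_hom_r_star frame_hom_i_star frame_hom_into_m_star
      frame_hom_into_pi1_star frame_hom_into_pi2_star pi1_r_star_eq_pi2_d_star
      m_star_d_star m_star_r_star open_map_d_star)+

end

theorem theorem5p6:
  fixes lact :: "'a::frame \<Rightarrow> 'q::frame \<Rightarrow> 'q"
    and ract :: "'q \<Rightarrow> 'a \<Rightarrow> 'q"
    and mult :: "'q \<Rightarrow> 'q \<Rightarrow> 'q"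
    and invl :: "'q \<Rightarrow> 'q"
    and ups :: "'q \<Rightarrow> 'a"
  assumes "groupoid_quantale lact ract mult invl ups"
  shows "assoc_graph_is_open_localic_groupoid lact ract mult invl ups"
proof -
  from assms obtain s where "equivariant_support lact mult invl s"
    unfolding groupoid_quantale_def by blast
  moreover have "based_quantal_frame lact ract mult invl"
    using assms unfolding groupoid_quantale_def reflexive_bqf_def by blast
  ultimately interpret supported_groupoid_quantale lact ract mult invl s ups
    using assms by unfold_locales
  show ?thesis by (rule assoc_graph_is_open_localic_groupoid)
qed

end
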